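(* Consider the coupled opinion–network system described in the context, and assume in addition that (i) there is a constant $c_\phi>0$ with $\phi(r)>c_\phi$ for all $r\in[-2,2]$, and (ii) there is a constant $c_f>0$ such that $f^+(w)_{ij}>c_f$ for all $i\neq j$ and all $w\in[0,1]^{N\times N}$ with $w_{ij}=0$. Then the population reaches consensus: there exists $x^*\in[-1,1]$ such that $x_i(t)\to x^*$ as $t\to\infty$ for every $i=1,\dots,N$ (equivalently, the opinion diameter $D(t)=\max_{i,j}|x_j(t)-x_i(t)|$ tends to $0$).
   Context: There are $N$ individuals with opinions $x_i(t)\in[-1,1]$ and edge weights $w_{ij}(t)\in[0,1]$, $i,j=1,\dots,N$. The degree is $k_i=\sum_{j=1}^N w_{ij}$. Given an interaction function $\phi:[-2,2]\to[0,1]$ and maps $f^+,f^-:[0,1]^{N\times N}\to\mathbb{R}_{\ge 0}^{N\times N}$, the system is $\frac{dx_i}{dt}=\frac{1}{k_i}\sum_{j\neq i} w_{ij}\,\phi(x_j-x_i)(x_j-x_i)$ for $i=1,\dots,N$; $\frac{dw_{ij}}{dt}=\phi(x_j-x_i)\,f^+(w)_{ij}-\big(1-\phi(x_j-x_i)\big)f^-(w)_{ij}$ for $i\neq j$; $\frac{dw_{ii}}{dt}=0$. Standing assumptions: $\phi$ is Lipschitz continuous, $\phi(r)=\phi(-r)$ for all $r$, and $\phi(0)>0$; initial opinions satisfy $x_1(0)\le x_2(0)\le\dots\le x_N(0)$; $w_{ii}=1$ for all $i$; the initial network $w(0)$ is strongly connected (for all $i,j$ there is a sequence $i=i_0,i_1,\dots,i_m=j$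 with $w_{i_n i_{n+1}}(0)>0$); $f^+$ and $f^-$ are non-negative and Lipschitz continuous; $f^+(w)_{ij}=0$ whenever $w_{ij}=1$; $f^-(w)_{ij}=0$ whenever $w_{ij}=0$. *)

theory Defs
  imports "HOL-Analysis.Analysis"
begin

text \<open>Individuals are indexed by {1..N}; an N x N matrix is a function nat => nat => real,
  of which only the entries with indices in {1..N} are meaningful.\<close>

definition mat_box :: "nat \<Rightarrow> (nat \<Rightarrow> nat \<Rightarrow> real) set" where
  "mat_box N = {w. \<forall>i\<in>{1..N}. \<forall>j\<in>{1..N}. 0 \<le> w i j \<and> w i j \<le> 1}"

text \<open>Lipschitz continuity of a matrix map on [0,1]^(N x N) (max-norm on entries; all norms
  on this finite-dimensional space are equivalent).\<close>
definition mat_lipschitz :: "nat \<Rightarrow> ((nat \<Rightarrow> nat \<Rightarrow> real) \<Rightarrow> nat \<Rightarrow> nat \<Rightarrow> real) \<Rightarrow> bool" where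
  "mat_lipschitz N f \<longleftrightarrow> (\<exists>L. \<forall>w\<in>mat_box N. \<forall>v\<in>mat_box N. \<forall>i\<in>{1..N}. \<forall>j\<in>{1..N}.
      \<bar>f w i j - f v i j\<bar> \<le> L * (MAX (k,l)\<in>{1..N}\<times>{1..N}. \<bar>w k l - v k l\<bar>))"

definition strongly_connected :: "nat \<Rightarrow> (nat \<Rightarrow> nat \<Rightarrow> real) \<Rightarrow> bool" where
  "strongly_connected N w \<longleftrightarrow> (\<forall>i\<in>{1..N}. \<forall>j\<in>{1..N}.
      (\<lambda>a b. a \<in> {1..N} \<and> b \<in> {1..N} \<and> w a b > 0)\<^sup>*\<^sup>* i j)"

end

(*
  Since phi > c_phi, and f+ > c_f where a weight vanishes, the Lipschitz bounds on f+ and f-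
  give dw_ij/dt >= beta - g w_ij; hence after some time T every off-diagonal weight is at least
  some delta > 0. From then on the opinions follow a linear consensus system
  x_i' = sum_j a_ij (x_j - x_i) whose coefficients a_ij = w_ij phi(x_j - x_i) / k_i lie in
  [kappa, 1]. For such a system the maximum principle keeps every opinion inside the current
  opinion range, and comparison with y' >= kappa y_p - |I| y (for y = max - x) shows that within
  one unit of time the range shrinks by the factor 1 - 2 kappa exp(-|I|). The diameter therefore
  decays geometrically and all opinions converge to a common limit.
*)

theory Submission
  imports Defs
begin

lemma linear_differential_inequality:
  fixes f f' :: "real \<Rightarrow> real"
  assumes "a \<le> b"
    and deriv: "\<And>s. s \<in> {a..b} \<Longrightarrow> (f has_real_derivative f' s) (at s within {a..b})"
    and growth: "\<And>s. s \<in> {a..b} \<Longrightarrow> c * f s + exp (c * (s - a)) * \<beta> \<le> f' s"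
  shows "exp (c * (b - a)) * (f a + \<beta> * (b - a)) \<le> f b"
proof -
  define F where "F s = exp (- c * (s - a)) * f s - \<beta> * (s - a)" for s
  have dF: "(F has_real_derivative exp (- c * (s - a)) * (f' s - c * f s) - \<beta>) (at s within {a..b})"
    if "s \<in> {a..b}" for s
    unfolding F_def using deriv[OF that]
    by (auto intro!: derivative_eq_intros simp: algebra_simps)
  have "F a \<le> F b"
  proof (rule DERIV_nonneg_imp_increasing_open[OF \<open>a \<le> b\<close>])
    fix s assume s: "a < s" "s < b"
    have "exp (- c * (s - a)) * (exp (c * (s - a)) * \<beta>) \<le> exp (- c * (s - a)) * (f' s - c * f s)"
      using growth[of s] s by (intro mult_left_mono) auto
    then have "0 \<le> exp (- c * (s - a)) * (f' s - c * f s) - \<beta>"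
      by (simp add: mult.assoc[symmetric] exp_add[symmetric])
    then show "\<exists>y. (F has_real_derivative y) (at s) \<and> 0 \<le> y"
      using dF[of s] s by (auto simp: at_within_Icc_at)
  next
    show "continuous_on {a..b} F"
      unfolding continuous_on_eq_continuous_within by (blast intro: DERIV_continuous dF)
  qed
  then have "exp (c * (b - a)) * (f a + \<beta> * (b - a)) \<le> exp (c * (b - a)) * (exp (- c * (b - a)) * f b)"
    unfolding F_def by (intro mult_left_mono) auto
  also have "\<dots> = f b"
    by (simp add: mult.assoc[symmetric] exp_add[symmetric])
  finally show ?thesis .
qed

lemma linear_growth_lower_bound:
  fixes f f' :: "real \<Rightarrow> real"
  assumes "0 < g" "t0 \<le> t" "0 \<le> f t0"
    and deriv: "\<And>s. t0 \<le> s \<Longrightarrow> (f has_real_derivative f' s) (at s within {t0..})"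
    and growth: "\<And>s. t0 \<le> s \<Longrightarrow> \<beta> - g * f s \<le> f' s"
  shows "\<beta> / g * (1 - exp (- g * (t - t0))) \<le> f t"
proof -
  have "exp (- g * (t - t0)) * (f t0 - \<beta> / g + 0 * (t - t0)) \<le> f t - \<beta> / g"
  proof (rule linear_differential_inequality[OF \<open>t0 \<le> t\<close>])
    fix s assume "s \<in> {t0..t}"
    then show "((\<lambda>s. f s - \<beta> / g) has_real_derivative f' s) (at s within {t0..t})"
      using DERIV_subset[OF deriv[of s]] by (auto intro!: derivative_eq_intros)
    show "- g * (f s - \<beta> / g) + exp (- g * (s - t0)) * 0 \<le> f' s"
      using growth[of s] \<open>s \<in> {t0..t}\<close> \<open>0 < g\<close> by (auto simp: algebra_simps)
  qed
  moreover have "0 \<le> exp (- g * (t - t0)) * f t0"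
    using \<open>0 \<le> f t0\<close> by simp
  ultimately show ?thesis
    by (simp add: algebra_simps)
qed

lemma has_real_derivative_pos_part_square:
  "((\<lambda>y::real. (max 0 y)\<^sup>2) has_real_derivative 2 * max 0 y) (at y)"
proof (cases "y = 0")
  case True
  have "((\<lambda>z::real. max 0 z) \<longlongrightarrow> 0) (at 0)"
    by (rule tendsto_eq_intros refl)+ simp
  moreover have "\<forall>\<^sub>F z in at (0::real). max 0 z = ((max 0 z)\<^sup>2 - (max 0 0)\<^sup>2) / (z - 0)"
    by (intro eventually_at_filter[THEN iffD2] always_eventually) (auto simp: max_def power2_eq_square)
  ultimately have "((\<lambda>z::real. ((max 0 z)\<^sup>2 - (max 0 0)\<^sup>2) / (z - 0)) \<longlongrightarrow> 0) (at 0)"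
    by (rule Lim_transform_eventually)
  then show ?thesis
    using True by (simp add: has_field_derivative_iff)
next
  case False
  have "((\<lambda>z. if 0 < y then z\<^sup>2 else 0) has_real_derivative 2 * max 0 y) (at y)"
    by (cases "0 < y") (auto intro!: derivative_eq_intros)
  then show ?thesis
    by (rule has_field_derivative_transform_within_open[where S = "if 0 < y then {0<..} else {..<0}"])
      (use False in \<open>auto simp: max_def\<close>)
qed

lemma pos_part_coupling_le:
  fixes a y z M :: real
  assumes "0 \<le> a" "a \<le> 1"
  shows "max 0 (y - M) * (a * (z - y)) \<le> max 0 (y - M) * max 0 (z - M)"
proof (cases "y \<le> M")
  case False
  have "a * (z - y) \<le> max 0 (z - M)"
  proof (cases "z \<le> y")
    case True
    then have "a * (z - y) \<le> 0" using assms by (simp add: mult_nonneg_nonpos)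
    then show ?thesis by linarith
  next
    case False
    then have "a * (z - y) \<le> z - y" using assms by (simp add: mult_left_le_one_le)
    then show ?thesis using \<open>\<not> y \<le> M\<close> by linarith
  qed
  then show ?thesis by (intro mult_left_mono) auto
qed simp

lemma pos_part_energy_bound:
  fixes z :: "'i \<Rightarrow> real" and a :: "'i \<Rightarrow> 'i \<Rightarrow> real"
  assumes "finite I" and "\<And>j k. j \<in> I \<Longrightarrow> k \<in> I \<Longrightarrow> 0 \<le> a j k \<and> a j k \<le> 1"
  shows "(\<Sum>j\<in>I. 2 * max 0 (z j - M) * (\<Sum>k\<in>I - {j}. a j k * (z k - z j)))
    \<le> 2 * real (card I) * (\<Sum>j\<in>I. (max 0 (z j - M))\<^sup>2)"
proof -
  define u where "u j = max 0 (z j - M)" for j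
  have "(\<Sum>j\<in>I. 2 * u j * (\<Sum>k\<in>I - {j}. a j k * (z k - z j))) \<le> (\<Sum>j\<in>I. \<Sum>k\<in>I - {j}. 2 * u j * u k)"
    unfolding u_def sum_distrib_left mult.assoc
    using assms by (intro sum_mono mult_left_mono pos_part_coupling_le) auto
  also have "\<dots> \<le> (\<Sum>j\<in>I. \<Sum>k\<in>I - {j}. (u j)\<^sup>2 + (u k)\<^sup>2)"
    by (intro sum_mono sum_squares_bound)
  also have "\<dots> \<le> (\<Sum>j\<in>I. \<Sum>k\<in>I. (u j)\<^sup>2 + (u k)\<^sup>2)"
    using assms by (intro sum_mono sum_mono2) auto
  also have "\<dots> = 2 * real (card I) * (\<Sum>j\<in>I. (u j)\<^sup>2)"
    by (simp add: sum.distrib sum_distrib_left mult.assoc)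
  finally show ?thesis
    unfolding u_def .
qed

lemma coupling_sum_lower_bound:
  fixes a y :: "'i \<Rightarrow> real"
  assumes "finite I" "j \<in> I" "p \<in> I" "\<kappa> \<le> 1"
    and y_nonneg: "\<And>k. k \<in> I \<Longrightarrow> 0 \<le> y k"
    and "\<And>k. k \<in> I \<Longrightarrow> 0 \<le> a k \<and> a k \<le> 1"
    and "\<And>k. k \<in> I \<Longrightarrow> k \<noteq> j \<Longrightarrow> \<kappa> \<le> a k"
  shows "\<kappa> * y p - card I * y j \<le> (\<Sum>k\<in>I - {j}. a k * (y k - y j))"
proof -
  have card_I: "real (card I - 1) = real (card I) - 1"
    using assms by (subst of_nat_diff) (auto simp: Suc_le_eq card_gt_0_iff)
  have pull: "(if p = j then 0 else \<kappa> * y p) \<le> (\<Sum>k\<in>I - {j}. a k * y k)"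
  proof (cases "p = j")
    case False
    then have "\<kappa> * y p \<le> a p * y p"
      using assms by (intro mult_right_mono) auto
    also have "\<dots> \<le> (\<Sum>k\<in>I - {j}. a k * y k)"
      using False assms by (intro member_le_sum) auto
    finally show ?thesis using False by simp
  qed (use assms in \<open>auto intro!: sum_nonneg\<close>)
  have "(\<Sum>k\<in>I - {j}. a k * y k - y j) \<le> (\<Sum>k\<in>I - {j}. a k * (y k - y j))"
    using assms by (intro sum_mono) (auto simp: algebra_simps mult_left_le_one_le)
  moreover have "(\<Sum>k\<in>I - {j}. a k * y k - y j) = (\<Sum>k\<in>I - {j}. a k * y k) - (real (card I) - 1) * y j"
    using assms card_I by (simp add: sum_subtractf card_Diff_singleton)
  moreover have "\<kappa> * y p - card I * y j \<le> (if p = j then 0 else \<kappa> * y p) - (real (card I) - 1) * y j"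
    using mult_right_mono[OF \<open>\<kappa> \<le> 1\<close> y_nonneg[of j]] y_nonneg[of j] assms
    by (auto simp: algebra_simps)
  ultimately show ?thesis using pull by linarith
qed

lemma tendsto_at_top_of_brackets:
  fixes f :: "real \<Rightarrow> real" and lo hi :: "nat \<Rightarrow> real"
  assumes bracket: "\<And>n t. t0 + real n \<le> t \<Longrightarrow> lo n \<le> f t \<and> f t \<le> hi n"
    and limit: "\<And>n. lo n \<le> L \<and> L \<le> hi n"
    and width: "(\<lambda>n. hi n - lo n) \<longlonglongrightarrow> 0"
  shows "(f \<longlongrightarrow> L) at_top"
proof (rule tendstoI)
  fix e :: real assume "0 < e"
  then obtain n where "norm (hi n - lo n - 0) < e"
    using LIMSEQ_D[OF width] by blast
  then have "dist (f t) L < e" if "t0 + real n \<le> t" for t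
    using bracket[OF that] limit[of n] by (auto simp: dist_real_def abs_less_iff)
  then show "\<forall>\<^sub>F t in at_top. dist (f t) L < e"
    unfolding eventually_at_top_linorder by blast
qed

lemma mat_lipschitz_zero_entry:
  assumes "mat_lipschitz N f"
  obtains L where "0 \<le> L"
    and "\<And>v i j. v \<in> mat_box N \<Longrightarrow> i \<in> {1..N} \<Longrightarrow> j \<in> {1..N} \<Longrightarrow>
      \<bar>f v i j - f (v(i := (v i)(j := 0))) i j\<bar> \<le> L * v i j"
proof -
  obtain L where L: "\<forall>w\<in>mat_box N. \<forall>v\<in>mat_box N. \<forall>i\<in>{1..N}. \<forall>j\<in>{1..N}.
      \<bar>f w i j - f v i j\<bar> \<le> L * (MAX (k, l)\<in>{1..N} \<times> {1..N}. \<bar>w k l - v k l\<bar>)"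
    using assms unfolding mat_lipschitz_def by blast
  show ?thesis
  proof (rule that[of "max L 0"])
    fix v i j assume v: "v \<in> mat_box N" and ij: "i \<in> {1..N}" "j \<in> {1..N}"
    define v0 where "v0 = v(i := (v i)(j := 0))"
    define d where "d = (MAX (k, l)\<in>{1..N} \<times> {1..N}. \<bar>v k l - v0 k l\<bar>)"
    have "v0 \<in> mat_box N"
      using v unfolding v0_def mat_box_def by auto
    have "0 \<le> d"
      unfolding d_def using ij by (subst Max_ge_iff) auto
    have "d \<le> v i j"
      unfolding d_def v0_def using v ij by (intro Max.boundedI) (auto simp: mat_box_def)
    have "\<bar>f v i j - f v0 i j\<bar> \<le> L * d"
      unfolding d_def using L[rule_format, OF v \<open>v0 \<in> mat_box N\<close> ij] .
    also have "\<dots> \<le> max L 0 * v i j"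
      using \<open>0 \<le> d\<close> \<open>d \<le> v i j\<close> by (intro order_trans[OF mult_right_mono mult_left_mono]) auto
    finally show "\<bar>f v i j - f (v(i := (v i)(j := 0))) i j\<bar> \<le> max L 0 * v i j"
      unfolding v0_def .
  qed simp
qed

locale consensus_dynamics =
  fixes I :: "'i set" and t0 :: real
    and x :: "real \<Rightarrow> 'i \<Rightarrow> real" and a :: "real \<Rightarrow> 'i \<Rightarrow> 'i \<Rightarrow> real"
  assumes finite_I: "finite I"
    and x_deriv: "\<And>t i. t0 \<le> t \<Longrightarrow> i \<in> I \<Longrightarrow>
      ((\<lambda>s. x s i) has_real_derivative (\<Sum>j\<in>I - {i}. a t i j * (x t j - x t i))) (at t within {t0..})"
    and a_nonneg: "\<And>t i j. t0 \<le> t \<Longrightarrow> i \<in> I \<Longrightarrow> j \<in> I \<Longrightarrow> 0 \<le> a t i j"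
    and a_le_one: "\<And>t i j. t0 \<le> t \<Longrightarrow> i \<in> I \<Longrightarrow> j \<in> I \<Longrightarrow> a t i j \<le> 1"
begin

lemma later_start:
  assumes "t0 \<le> t1"
  shows "consensus_dynamics I t1 x a"
proof
  fix t i assume "t1 \<le> t" "i \<in> I"
  then show "((\<lambda>s. x s i) has_real_derivative (\<Sum>j\<in>I - {i}. a t i j * (x t j - x t i))) (at t within {t1..})"
    using assms by (intro DERIV_subset[OF x_deriv]) auto
qed (use assms finite_I a_nonneg a_le_one in auto)

lemma negated_dynamics: "consensus_dynamics I t0 (\<lambda>t i. - x t i) a"
proof
  fix t i assume "t0 \<le> t" "i \<in> I"
  from DERIV_minus[OF x_deriv[OF this]]
  show "((\<lambda>s. - x s i) has_real_derivative (\<Sum>j\<in>I - {i}. a t i j * (- x t j - - x t i))) (at t within {t0..})"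
    by (simp add: sum_negf[symmetric] algebra_simps)
qed (use finite_I a_nonneg a_le_one in auto)

lemma upper_bound_invariant:
  assumes init: "\<And>j. j \<in> I \<Longrightarrow> x t0 j \<le> M" and "t0 \<le> t" "i \<in> I"
  shows "x t i \<le> M"
proof -
  define u where "u s j = max 0 (x s j - M)" for s j
  define V where "V s = (\<Sum>j\<in>I. (u s j)\<^sup>2)" for s
  define V' where "V' s = (\<Sum>j\<in>I. 2 * u s j * (\<Sum>k\<in>I - {j}. a s j k * (x s k - x s j)))" for s
  define C where "C = 2 * real (card I)"
  have dV: "((\<lambda>s. - V s) has_real_derivative - V' s) (at s within {t0..t})" if s: "s \<in> {t0..t}" for s
  proof -
    have "((\<lambda>s. (u s j)\<^sup>2) has_real_derivative
        2 * u s j * (\<Sum>k\<in>I - {j}. a s j k * (x s k - x s j))) (at s within {t0..t})"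
      if "j \<in> I" for j
    proof -
      have "((\<lambda>s. x s j - M) has_real_derivative (\<Sum>k\<in>I - {j}. a s j k * (x s k - x s j)))
          (at s within {t0..t})"
        using DERIV_subset[OF x_deriv[of s j]] that s by (auto intro!: derivative_eq_intros)
      from DERIV_chain2[OF has_real_derivative_pos_part_square this]
      show ?thesis unfolding u_def by simp
    qed
    then show ?thesis
      unfolding V_def V'_def by (intro DERIV_minus DERIV_sum)
  qed
  have "V' s \<le> C * V s" if "s \<in> {t0..t}" for s
    unfolding V'_def V_def C_def u_def using that a_nonneg a_le_one
    by (intro pos_part_energy_bound[OF finite_I]) auto
  then have "exp (C * (t - t0)) * (- V t0 + 0 * (t - t0)) \<le> - V t"
    by (intro linear_differential_inequality[OF \<open>t0 \<le> t\<close> dV]) auto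
  moreover have "V t0 = 0"
    unfolding V_def u_def using init by (intro sum.neutral) auto
  ultimately have "V t \<le> 0"
    by simp
  moreover have "(u t i)\<^sup>2 \<le> V t"
    unfolding V_def using finite_I \<open>i \<in> I\<close> by (intro member_le_sum) auto
  ultimately have "(u t i)\<^sup>2 \<le> 0"
    by linarith
  then show ?thesis
    unfolding u_def by (simp add: max_def split: if_splits)
qed

lemma lower_bound_invariant:
  assumes "\<And>j. j \<in> I \<Longrightarrow> m \<le> x t0 j" and "t0 \<le> t" "i \<in> I"
  shows "m \<le> x t i"
proof -
  interpret neg: consensus_dynamics I t0 "\<lambda>t i. - x t i" a
    by (rule negated_dynamics)
  show ?thesis
    using neg.upper_bound_invariant[of "- m"] assms by auto
qed

lemma upper_bound_contraction:
  assumes "0 \<le> \<kappa>" "\<kappa> \<le> 1"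
    and a_lower: "\<And>t i j. t0 \<le> t \<Longrightarrow> i \<in> I \<Longrightarrow> j \<in> I \<Longrightarrow> i \<noteq> j \<Longrightarrow> \<kappa> \<le> a t i j"
    and init: "\<And>j. j \<in> I \<Longrightarrow> x t0 j \<le> M" and "p \<in> I" "i \<in> I"
  shows "x (t0 + 1) i \<le> M - \<kappa> * exp (- real (card I)) * (M - x t0 p)"
proof -
  define n where "n = real (card I)"
  define y where "y s j = M - x s j" for s j
  have y_nonneg: "0 \<le> y s j" if "t0 \<le> s" "j \<in> I" for s j
    unfolding y_def using upper_bound_invariant[OF init that] by simp
  have y_deriv: "((\<lambda>s. y s j) has_real_derivative (\<Sum>k\<in>I - {j}. a s j k * (y s k - y s j)))
      (at s within {t0..t})" if "s \<in> {t0..t}" "j \<in> I" for s t j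
  proof -
    have "((\<lambda>s. M - x s j) has_real_derivative 0 - (\<Sum>k\<in>I - {j}. a s j k * (x s k - x s j)))
        (at s within {t0..t})"
      using that by (intro DERIV_diff DERIV_const DERIV_subset[OF x_deriv]) auto
    then show ?thesis
      unfolding y_def by (simp add: sum_negf[symmetric] algebra_simps)
  qed
  have y_growth: "- n * y s j + \<kappa> * y s p \<le> (\<Sum>k\<in>I - {j}. a s j k * (y s k - y s j))"
    if "t0 \<le> s" "j \<in> I" for s j
    using coupling_sum_lower_bound[OF finite_I \<open>j \<in> I\<close> \<open>p \<in> I\<close> \<open>\<kappa> \<le> 1\<close>, of "y s" "a s j"]
      that y_nonneg a_nonneg a_le_one a_lower unfolding n_def by auto
  \<comment> \<open>The gap y p decays at most like exp (- n s), and it drives every y i from below.\<close>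
  have p_growth: "exp (- n * (s - t0)) * y t0 p \<le> y s p" if "t0 \<le> s" for s
  proof -
    have "exp (- n * (s - t0)) * (y t0 p + 0 * (s - t0)) \<le> y s p"
    proof (rule linear_differential_inequality[OF that y_deriv])
      fix r assume "r \<in> {t0..s}"
      then show "- n * y r p + exp (- n * (r - t0)) * 0 \<le> (\<Sum>k\<in>I - {p}. a r p k * (y r k - y r p))"
        using y_growth[of r p] mult_nonneg_nonneg[OF \<open>0 \<le> \<kappa>\<close> y_nonneg[of r p]] \<open>p \<in> I\<close> by auto
    qed (use \<open>p \<in> I\<close> in auto)
    then show ?thesis by simp
  qed
  have "exp (- n * (t0 + 1 - t0)) * (y t0 i + \<kappa> * y t0 p * (t0 + 1 - t0)) \<le> y (t0 + 1) i"
  proof (rule linear_differential_inequality[OF _ y_deriv])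
    fix r assume r: "r \<in> {t0..t0 + 1}"
    have "exp (- n * (r - t0)) * (\<kappa> * y t0 p) \<le> \<kappa> * y r p"
      using mult_left_mono[OF p_growth[of r] \<open>0 \<le> \<kappa>\<close>] r by (simp add: ac_simps)
    then show "- n * y r i + exp (- n * (r - t0)) * (\<kappa> * y t0 p) \<le> (\<Sum>k\<in>I - {i}. a r i k * (y r k - y r i))"
      using y_growth[of r i] r \<open>i \<in> I\<close> by auto
  qed (use \<open>i \<in> I\<close> in auto)
  moreover have "0 \<le> exp (- n) * y t0 i"
    using y_nonneg[of t0 i] \<open>i \<in> I\<close> by simp
  ultimately have "\<kappa> * exp (- n) * y t0 p \<le> y (t0 + 1) i"
    by (simp add: algebra_simps)
  then show ?thesis
    unfolding y_def n_def by (simp add: algebra_simps)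
qed

lemma lower_bound_contraction:
  assumes "0 \<le> \<kappa>" "\<kappa> \<le> 1"
    and "\<And>t i j. t0 \<le> t \<Longrightarrow> i \<in> I \<Longrightarrow> j \<in> I \<Longrightarrow> i \<noteq> j \<Longrightarrow> \<kappa> \<le> a t i j"
    and "\<And>j. j \<in> I \<Longrightarrow> m \<le> x t0 j" and "p \<in> I" "i \<in> I"
  shows "m + \<kappa> * exp (- real (card I)) * (x t0 p - m) \<le> x (t0 + 1) i"
proof -
  interpret neg: consensus_dynamics I t0 "\<lambda>t i. - x t i" a
    by (rule negated_dynamics)
  show ?thesis
    using neg.upper_bound_contraction[of \<kappa> "- m" p i] assms by (auto simp: algebra_simps)
qed

definition opinion_max :: "real \<Rightarrow> real" where
  "opinion_max t = Max ((\<lambda>i. x t i) ` I)"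

definition opinion_min :: "real \<Rightarrow> real" where
  "opinion_min t = Min ((\<lambda>i. x t i) ` I)"

lemma opinion_min_max_bounds:
  assumes "i \<in> I"
  shows "opinion_min t \<le> x t i" "x t i \<le> opinion_max t"
  unfolding opinion_min_def opinion_max_def using finite_I assms by auto

lemma opinion_range_invariant:
  assumes "t0 \<le> s" "s \<le> t" "i \<in> I"
  shows "opinion_min s \<le> x t i \<and> x t i \<le> opinion_max s"
proof -
  interpret later: consensus_dynamics I s x a
    by (rule later_start) fact
  show ?thesis
    using later.lower_bound_invariant later.upper_bound_invariant opinion_min_max_bounds assms by blast
qed

lemma diameter_contraction:
  assumes "I \<noteq> {}" "0 \<le> \<kappa>" "\<kappa> \<le> 1"
    and a_lower: "\<And>t i j. t0 \<le> t \<Longrightarrow> i \<in> I \<Longrightarrow> j \<in> I \<Longrightarrow> i \<noteq> j \<Longrightarrow> \<kappa> \<le> a t i j"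
    and "t0 \<le> s"
  shows "opinion_max (s + 1) - opinion_min (s + 1)
    \<le> (1 - 2 * \<kappa> * exp (- real (card I))) * (opinion_max s - opinion_min s)"
proof -
  interpret later: consensus_dynamics I s x a
    by (rule later_start) fact
  have a_lower': "\<And>t i j. s \<le> t \<Longrightarrow> i \<in> I \<Longrightarrow> j \<in> I \<Longrightarrow> i \<noteq> j \<Longrightarrow> \<kappa> \<le> a t i j"
    using a_lower \<open>t0 \<le> s\<close> by auto
  have "opinion_min s \<in> (\<lambda>i. x s i) ` I"
    unfolding opinion_min_def using finite_I \<open>I \<noteq> {}\<close> by (intro Min_in) auto
  then obtain p where p: "p \<in> I" "x s p = opinion_min s"
    by auto
  have "opinion_max s \<in> (\<lambda>i. x s i) ` I"
    unfolding opinion_max_def using finite_I \<open>I \<noteq> {}\<close> by (intro Max_in) auto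
  then obtain q where q: "q \<in> I" "x s q = opinion_max s"
    by auto
  define \<rho> where "\<rho> = \<kappa> * exp (- real (card I))"
  have "opinion_max (s + 1) \<le> opinion_max s - \<rho> * (opinion_max s - opinion_min s)"
    unfolding opinion_max_def[of "s + 1"] \<rho>_def
    using later.upper_bound_contraction[OF assms(2,3) a_lower' opinion_min_max_bounds(2) p(1)] p(2) finite_I \<open>I \<noteq> {}\<close>
    by (intro Max.boundedI) auto
  moreover have "opinion_min s + \<rho> * (opinion_max s - opinion_min s) \<le> opinion_min (s + 1)"
    unfolding opinion_min_def[of "s + 1"] \<rho>_def
    using later.lower_bound_contraction[OF assms(2,3) a_lower' opinion_min_max_bounds(1) q(1)] q(2) finite_I \<open>I \<noteq> {}\<close>
    by (intro Min.boundedI) auto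
  ultimately show ?thesis
    unfolding \<rho>_def by (simp add: algebra_simps)
qed

lemma diameter_tendsto_zero:
  assumes "I \<noteq> {}" "0 < \<kappa>" "\<kappa> \<le> 1"
    and a_lower: "\<And>t i j. t0 \<le> t \<Longrightarrow> i \<in> I \<Longrightarrow> j \<in> I \<Longrightarrow> i \<noteq> j \<Longrightarrow> \<kappa> \<le> a t i j"
  shows "(\<lambda>n. opinion_max (t0 + real n) - opinion_min (t0 + real n)) \<longlonglongrightarrow> 0"
proof -
  define D where "D n = opinion_max (t0 + real n) - opinion_min (t0 + real n)" for n :: nat
  define q where "q = 1 - 2 * \<kappa> * exp (- real (card I))"
  have "exp (- real (card I)) \<le> exp (- 1)"
    using finite_I \<open>I \<noteq> {}\<close> by (simp add: Suc_le_eq card_gt_0_iff)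
  also have "exp (- 1) \<le> 1 / (2 :: real)"
    using exp_ge_add_one_self[of 1] by (simp add: exp_minus field_simps)
  finally have "\<kappa> * exp (- real (card I)) \<le> 1 * (1 / 2)"
    using \<open>\<kappa> \<le> 1\<close> by (intro mult_mono) auto
  then have q: "0 \<le> q" "q < 1"
    unfolding q_def using \<open>0 < \<kappa>\<close> by auto
  have D_decay: "D n \<le> q ^ n * D 0" for n
  proof (induction n)
    case (Suc n)
    have Suc_time: "t0 + real (Suc n) = t0 + real n + 1"
      by simp
    have "D (Suc n) \<le> q * D n"
      using diameter_contraction[OF \<open>I \<noteq> {}\<close> _ \<open>\<kappa> \<le> 1\<close> a_lower, of "t0 + real n"] \<open>0 < \<kappa>\<close>
      unfolding D_def q_def Suc_time by simp
    also have "\<dots> \<le> q * (q ^ n * D 0)"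
      using Suc.IH q by (intro mult_left_mono) auto
    finally show ?case by simp
  qed simp
  obtain i0 where "i0 \<in> I"
    using \<open>I \<noteq> {}\<close> by blast
  then have D_nonneg: "0 \<le> D n" for n
    unfolding D_def using opinion_min_max_bounds[of i0 "t0 + real n"] by simp
  have "(\<lambda>n. q ^ n * D 0) \<longlonglongrightarrow> 0"
    using q by (intro tendsto_mult_left_zero LIMSEQ_power_zero) auto
  then have "D \<longlonglongrightarrow> 0"
    by (rule Lim_null_comparison[OF always_eventually, rotated]) (use D_nonneg D_decay in auto)
  then show ?thesis
    unfolding D_def .
qed

lemma consensus:
  assumes "I \<noteq> {}" "0 < \<kappa>" "\<kappa> \<le> 1"
    and "\<And>t i j. t0 \<le> t \<Longrightarrow> i \<in> I \<Longrightarrow> j \<in> I \<Longrightarrow> i \<noteq> j \<Longrightarrow> \<kappa> \<le> a t i j"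
  obtains L where "\<And>i. i \<in> I \<Longrightarrow> ((\<lambda>t. x t i) \<longlongrightarrow> L) at_top"
proof -
  define hi where "hi n = opinion_max (t0 + real n)" for n :: nat
  define lo where "lo n = opinion_min (t0 + real n)" for n :: nat
  have bracket: "lo n \<le> x t i \<and> x t i \<le> hi n" if "t0 + real n \<le> t" "i \<in> I" for n t i
    unfolding lo_def hi_def using opinion_range_invariant that by simp
  obtain i0 where "i0 \<in> I"
    using \<open>I \<noteq> {}\<close> by blast
  then have lo_le_hi: "lo n \<le> hi m" for n m
    using bracket[of n "t0 + real (max n m)" i0] bracket[of m "t0 + real (max n m)" i0] by simp
  define L where "L = Inf (range hi)"
  have "bdd_below (range hi)"
    using lo_le_hi by (intro bdd_belowI2)
  then have L: "lo n \<le> L \<and> L \<le> hi n" for n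
    unfolding L_def using lo_le_hi by (auto intro: cInf_greatest cInf_lower)
  have width: "(\<lambda>n. hi n - lo n) \<longlonglongrightarrow> 0"
    unfolding hi_def lo_def using diameter_tendsto_zero[OF assms] .
  show thesis
  proof (rule that)
    fix i assume "i \<in> I"
    show "((\<lambda>t. x t i) \<longlongrightarrow> L) at_top"
      using bracket[OF _ \<open>i \<in> I\<close>] L width by (rule tendsto_at_top_of_brackets)
  qed
qed

end

locale opinion_network =
  fixes N :: nat
    and phi :: "real \<Rightarrow> real"
    and fp fm :: "(nat \<Rightarrow> nat \<Rightarrow> real) \<Rightarrow> nat \<Rightarrow> nat \<Rightarrow> real"
    and x :: "real \<Rightarrow> nat \<Rightarrow> real"
    and w :: "real \<Rightarrow> nat \<Rightarrow> nat \<Rightarrow> real"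
    and c_phi c_f :: real
  assumes phi_range: "\<And>r. r \<in> {-2..2} \<Longrightarrow> 0 \<le> phi r \<and> phi r \<le> 1"
    and fm_nonneg: "\<And>v i j. v \<in> mat_box N \<Longrightarrow> i \<in> {1..N} \<Longrightarrow> j \<in> {1..N} \<Longrightarrow> fm v i j \<ge> 0"
    and fp_lip: "mat_lipschitz N fp"
    and fm_lip: "mat_lipschitz N fm"
    and fm_zero: "\<And>v i j. v \<in> mat_box N \<Longrightarrow> i \<in> {1..N} \<Longrightarrow> j \<in> {1..N} \<Longrightarrow> v i j = 0 \<Longrightarrow> fm v i j = 0"
    and x_range: "\<And>t i. t \<ge> 0 \<Longrightarrow> i \<in> {1..N} \<Longrightarrow> x t i \<in> {-1..1}"
    and w_range: "\<And>t. t \<ge> 0 \<Longrightarrow> w t \<in> mat_box N"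
    and w_diag: "\<And>t i. t \<ge> 0 \<Longrightarrow> i \<in> {1..N} \<Longrightarrow> w t i i = 1"
    and x_ode: "\<And>t i. t \<ge> 0 \<Longrightarrow> i \<in> {1..N} \<Longrightarrow>
        ((\<lambda>s. x s i) has_real_derivative
          (1 / (\<Sum>j\<in>{1..N}. w t i j)) *
          (\<Sum>j\<in>{1..N} - {i}. w t i j * phi (x t j - x t i) * (x t j - x t i)))
        (at t within {0..})"
    and w_ode: "\<And>t i j. t \<ge> 0 \<Longrightarrow> i \<in> {1..N} \<Longrightarrow> j \<in> {1..N} \<Longrightarrow> i \<noteq> j \<Longrightarrow>
        ((\<lambda>s. w s i j) has_real_derivative
          (phi (x t j - x t i) * fp (w t) i j - (1 - phi (x t j - x t i)) * fm (w t) i j))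
        (at t within {0..})"
    and c_phi_pos: "c_phi > 0"
    and phi_lower: "\<And>r. r \<in> {-2..2} \<Longrightarrow> phi r > c_phi"
    and c_f_pos: "c_f > 0"
    and fp_lower: "\<And>v i j. v \<in> mat_box N \<Longrightarrow> i \<in> {1..N} \<Longrightarrow> j \<in> {1..N} \<Longrightarrow> i \<noteq> j \<Longrightarrow>
        v i j = 0 \<Longrightarrow> fp v i j > c_f"
begin

lemma w_bounds:
  assumes "0 \<le> t" "i \<in> {1..N}" "j \<in> {1..N}"
  shows "0 \<le> w t i j" "w t i j \<le> 1"
  using w_range[OF assms(1)] assms(2,3) unfolding mat_box_def by auto

lemma phi_bounds:
  assumes "0 \<le> t" "i \<in> {1..N}" "j \<in> {1..N}"
  shows "c_phi < phi (x t j - x t i)" "phi (x t j - x t i) \<le> 1"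
proof -
  have "x t j - x t i \<in> {-2..2}"
    using x_range[OF assms(1,2)] x_range[OF assms(1,3)] by auto
  then show "c_phi < phi (x t j - x t i)" "phi (x t j - x t i) \<le> 1"
    using phi_lower phi_range by auto
qed

lemma fp_fm_linear_bounds:
  obtains Lp Lm where "0 \<le> Lp" "0 \<le> Lm"
    and "\<And>v i j. v \<in> mat_box N \<Longrightarrow> i \<in> {1..N} \<Longrightarrow> j \<in> {1..N} \<Longrightarrow> i \<noteq> j \<Longrightarrow>
      c_f - Lp * v i j \<le> fp v i j"
    and "\<And>v i j. v \<in> mat_box N \<Longrightarrow> i \<in> {1..N} \<Longrightarrow> j \<in> {1..N} \<Longrightarrow> fm v i j \<le> Lm * v i j"
proof -
  obtain Lp where Lp: "0 \<le> Lp" "\<And>v i j. v \<in> mat_box N \<Longrightarrow> i \<in> {1..N} \<Longrightarrow> j \<in> {1..N} \<Longrightarrow>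
      \<bar>fp v i j - fp (v(i := (v i)(j := 0))) i j\<bar> \<le> Lp * v i j"
    using mat_lipschitz_zero_entry[OF fp_lip] by blast
  obtain Lm where Lm: "0 \<le> Lm" "\<And>v i j. v \<in> mat_box N \<Longrightarrow> i \<in> {1..N} \<Longrightarrow> j \<in> {1..N} \<Longrightarrow>
      \<bar>fm v i j - fm (v(i := (v i)(j := 0))) i j\<bar> \<le> Lm * v i j"
    using mat_lipschitz_zero_entry[OF fm_lip] by blast
  show ?thesis
  proof (rule that[OF Lp(1) Lm(1)])
    fix v :: "nat \<Rightarrow> nat \<Rightarrow> real" and i j
    assume v: "v \<in> mat_box N" and ij: "i \<in> {1..N}" "j \<in> {1..N}"
    have v0: "v(i := (v i)(j := 0)) \<in> mat_box N" "(v(i := (v i)(j := 0))) i j = 0"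
      using v unfolding mat_box_def by auto
    show "fm v i j \<le> Lm * v i j"
      using Lm(2)[OF v ij] fm_zero[OF v0(1) ij v0(2)] unfolding abs_le_iff by linarith
    assume "i \<noteq> j"
    show "c_f - Lp * v i j \<le> fp v i j"
      using Lp(2)[OF v ij] fp_lower[OF v0(1) ij \<open>i \<noteq> j\<close> v0(2)] unfolding abs_le_iff by linarith
  qed
qed

lemma weight_growth:
  obtains \<beta> g where "0 < \<beta>" "0 < g"
    and "\<And>t i j. 0 \<le> t \<Longrightarrow> i \<in> {1..N} \<Longrightarrow> j \<in> {1..N} \<Longrightarrow> i \<noteq> j \<Longrightarrow>
      \<beta> - g * w t i j \<le> phi (x t j - x t i) * fp (w t) i j - (1 - phi (x t j - x t i)) * fm (w t) i j"
proof -
  obtain Lp Lm where L: "0 \<le> Lp" "0 \<le> Lm"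
    and fp_ge: "\<And>v i j. v \<in> mat_box N \<Longrightarrow> i \<in> {1..N} \<Longrightarrow> j \<in> {1..N} \<Longrightarrow> i \<noteq> j \<Longrightarrow>
      c_f - Lp * v i j \<le> fp v i j"
    and fm_le: "\<And>v i j. v \<in> mat_box N \<Longrightarrow> i \<in> {1..N} \<Longrightarrow> j \<in> {1..N} \<Longrightarrow> fm v i j \<le> Lm * v i j"
    using fp_fm_linear_bounds by blast
  show ?thesis
  proof (rule that[of "c_phi * c_f" "Lp + Lm + 1"])
    fix t :: real and i j assume t: "0 \<le> t" and ij: "i \<in> {1..N}" "j \<in> {1..N}" "i \<noteq> j"
    define p where "p = phi (x t j - x t i)"
    have p: "c_phi < p" "p \<le> 1"
      using phi_bounds[OF t ij(1,2)] unfolding p_def by auto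
    have w: "0 \<le> w t i j"
      using w_bounds[OF t ij(1,2)] by simp
    have "c_phi * c_f \<le> p * c_f"
      using p c_f_pos by (intro mult_right_mono) auto
    moreover have "p * (Lp * w t i j) \<le> 1 * (Lp * w t i j)"
      using p L w by (intro mult_right_mono) auto
    moreover have "p * (c_f - Lp * w t i j) \<le> p * fp (w t) i j"
      using p c_phi_pos fp_ge[OF w_range[OF t] ij] by (intro mult_left_mono) auto
    moreover have "(1 - p) * fm (w t) i j \<le> 1 * (Lm * w t i j)"
      using p c_phi_pos fm_le[OF w_range[OF t] ij(1,2)] fm_nonneg[OF w_range[OF t] ij(1,2)]
      by (intro mult_mono) auto
    ultimately show "c_phi * c_f - (Lp + Lm + 1) * w t i j \<le> p * fp (w t) i j - (1 - p) * fm (w t) i j"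
      using w by (simp add: algebra_simps)
  qed (use c_phi_pos c_f_pos L in auto)
qed

lemma weights_eventually_bounded_below:
  obtains \<delta> T where "0 < \<delta>" "0 \<le> T"
    and "\<And>t i j. T \<le> t \<Longrightarrow> i \<in> {1..N} \<Longrightarrow> j \<in> {1..N} \<Longrightarrow> i \<noteq> j \<Longrightarrow> \<delta> \<le> w t i j"
proof -
  obtain \<beta> g where \<beta>g: "0 < \<beta>" "0 < g"
    and growth: "\<And>t i j. 0 \<le> t \<Longrightarrow> i \<in> {1..N} \<Longrightarrow> j \<in> {1..N} \<Longrightarrow> i \<noteq> j \<Longrightarrow>
      \<beta> - g * w t i j \<le> phi (x t j - x t i) * fp (w t) i j - (1 - phi (x t j - x t i)) * fm (w t) i j"
    using weight_growth by blast
  show ?thesis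
  proof (rule that[of "\<beta> / (2 * g)" "ln 2 / g"])
    fix t :: real and i j assume t: "ln 2 / g \<le> t" and ij: "i \<in> {1..N}" "j \<in> {1..N}" "i \<noteq> j"
    have "0 \<le> ln 2 / g"
      using \<beta>g by simp
    then have "0 \<le> t"
      using t by linarith
    have "exp (- g * (t - 0)) \<le> exp (- ln 2)"
      using t \<beta>g by (simp add: field_simps)
    then have "1 / 2 \<le> 1 - exp (- g * (t - 0))"
      by (simp add: exp_minus)
    then have "\<beta> / g * (1 / 2) \<le> \<beta> / g * (1 - exp (- g * (t - 0)))"
      using \<beta>g by (intro mult_left_mono) auto
    also have "\<dots> \<le> w t i j"
      using \<open>0 \<le> t\<close> w_bounds[of 0 i j] ij w_ode[OF _ ij] growth[OF _ ij] \<beta>g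
      by (intro linear_growth_lower_bound) auto
    finally show "\<beta> / (2 * g) \<le> w t i j"
      by simp
  qed (use \<beta>g in auto)
qed

definition coupling :: "real \<Rightarrow> nat \<Rightarrow> nat \<Rightarrow> real" where
  "coupling t i j = w t i j * phi (x t j - x t i) / (\<Sum>k\<in>{1..N}. w t i k)"

lemma degree_bounds:
  assumes "0 \<le> t" "i \<in> {1..N}"
  shows "1 \<le> (\<Sum>k\<in>{1..N}. w t i k)" "(\<Sum>k\<in>{1..N}. w t i k) \<le> N"
proof -
  have "w t i i \<le> (\<Sum>k\<in>{1..N}. w t i k)"
    using assms w_bounds by (intro member_le_sum) auto
  then show "1 \<le> (\<Sum>k\<in>{1..N}. w t i k)"
    using w_diag[OF assms] by simp
  have "(\<Sum>k\<in>{1..N}. w t i k) \<le> real (card {1..N}) * 1"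
    using assms w_bounds by (intro sum_bounded_above) auto
  then show "(\<Sum>k\<in>{1..N}. w t i k) \<le> N"
    by simp
qed

lemma coupling_bounds:
  assumes "0 \<le> t" "i \<in> {1..N}" "j \<in> {1..N}"
  shows "0 \<le> coupling t i j" "coupling t i j \<le> 1"
proof -
  have "0 \<le> w t i j * phi (x t j - x t i)" "w t i j * phi (x t j - x t i) \<le> 1"
    using w_bounds[OF assms] phi_bounds[OF assms] c_phi_pos by (auto intro: mult_le_one)
  then show "0 \<le> coupling t i j" "coupling t i j \<le> 1"
    unfolding coupling_def using degree_bounds(1)[OF assms(1,2)] by (auto simp: divide_le_eq)
qed

lemma opinion_consensus_dynamics: "consensus_dynamics {1..N} 0 x coupling"
proof
  fix t :: real and i assume "0 \<le> t" "i \<in> {1..N}"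
  have "1 / (\<Sum>k\<in>{1..N}. w t i k) * (\<Sum>j\<in>{1..N} - {i}. w t i j * phi (x t j - x t i) * (x t j - x t i))
      = (\<Sum>j\<in>{1..N} - {i}. coupling t i j * (x t j - x t i))"
    unfolding coupling_def sum_distrib_left by (intro sum.cong) auto
  then show "((\<lambda>s. x s i) has_real_derivative (\<Sum>j\<in>{1..N} - {i}. coupling t i j * (x t j - x t i)))
      (at t within {0..})"
    using x_ode[OF \<open>0 \<le> t\<close> \<open>i \<in> {1..N}\<close>] by simp
qed (use coupling_bounds in auto)

lemma coupling_eventually_bounded_below:
  assumes "N \<noteq> 0"
  obtains \<kappa> T where "0 < \<kappa>" "\<kappa> \<le> 1" "0 \<le> T"
    and "\<And>t i j. T \<le> t \<Longrightarrow> i \<in> {1..N} \<Longrightarrow> j \<in> {1..N} \<Longrightarrow> i \<noteq> j \<Longrightarrow> \<kappa> \<le> coupling t i j"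
proof -
  obtain \<delta> T where \<delta>: "0 < \<delta>" "0 \<le> T"
    and w_lower: "\<And>t i j. T \<le> t \<Longrightarrow> i \<in> {1..N} \<Longrightarrow> j \<in> {1..N} \<Longrightarrow> i \<noteq> j \<Longrightarrow> \<delta> \<le> w t i j"
    using weights_eventually_bounded_below by blast
  show ?thesis
  proof (rule that[of "min 1 (\<delta> * c_phi / N)" T])
    fix t :: real and i j assume t: "T \<le> t" and ij: "i \<in> {1..N}" "j \<in> {1..N}" "i \<noteq> j"
    then have "0 \<le> t"
      using \<delta> by linarith
    have "\<delta> * c_phi \<le> w t i j * phi (x t j - x t i)"
      using w_lower[OF t ij] phi_bounds[OF \<open>0 \<le> t\<close> ij(1,2)] \<delta> c_phi_pos by (intro mult_mono) auto
    moreover have "0 \<le> \<delta> * c_phi"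
      using \<delta> c_phi_pos by simp
    ultimately have "\<delta> * c_phi / N \<le> coupling t i j"
      unfolding coupling_def using degree_bounds[OF \<open>0 \<le> t\<close> ij(1)]
      by (intro frac_le) auto
    then show "min 1 (\<delta> * c_phi / N) \<le> coupling t i j"
      by simp
  qed (use \<delta> c_phi_pos assms in auto)
qed

end

theorem proposition1:
  fixes N :: nat
    and phi :: "real \<Rightarrow> real"
    and fp fm :: "(nat \<Rightarrow> nat \<Rightarrow> real) \<Rightarrow> nat \<Rightarrow> nat \<Rightarrow> real"
    and x :: "real \<Rightarrow> nat \<Rightarrow> real"
    and w :: "real \<Rightarrow> nat \<Rightarrow> nat \<Rightarrow> real"
    and c_phi c_f :: real
  assumes phi_range: "\<And>r. r \<in> {-2..2} \<Longrightarrow> 0 \<le> phi r \<and> phi r \<le> 1"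
    and phi_lip: "lipschitz_on L_phi {-2..2} phi"
    and phi_sym: "\<And>r. phi r = phi (- r)"
    and phi_0: "phi 0 > 0"
    and fp_nonneg: "\<And>v i j. v \<in> mat_box N \<Longrightarrow> i \<in> {1..N} \<Longrightarrow> j \<in> {1..N} \<Longrightarrow> fp v i j \<ge> 0"
    and fm_nonneg: "\<And>v i j. v \<in> mat_box N \<Longrightarrow> i \<in> {1..N} \<Longrightarrow> j \<in> {1..N} \<Longrightarrow> fm v i j \<ge> 0"
    and fp_lip: "mat_lipschitz N fp"
    and fm_lip: "mat_lipschitz N fm"
    and fp_one: "\<And>v i j. v \<in> mat_box N \<Longrightarrow> i \<in> {1..N} \<Longrightarrow> j \<in> {1..N} \<Longrightarrow> v i j = 1 \<Longrightarrow> fp v i j = 0"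
    and fm_zero: "\<And>v i j. v \<in> mat_box N \<Longrightarrow> i \<in> {1..N} \<Longrightarrow> j \<in> {1..N} \<Longrightarrow> v i j = 0 \<Longrightarrow> fm v i j = 0"
    and x_range: "\<And>t i. t \<ge> 0 \<Longrightarrow> i \<in> {1..N} \<Longrightarrow> x t i \<in> {-1..1}"
    and w_range: "\<And>t. t \<ge> 0 \<Longrightarrow> w t \<in> mat_box N"
    and w_diag: "\<And>t i. t \<ge> 0 \<Longrightarrow> i \<in> {1..N} \<Longrightarrow> w t i i = 1"
    and x_sorted: "\<And>i j. i \<in> {1..N} \<Longrightarrow> j \<in> {1..N} \<Longrightarrow> i \<le> j \<Longrightarrow> x 0 i \<le> x 0 j"
    and w_conn: "strongly_connected N (w 0)"
    and x_ode: "\<And>t i. t \<ge> 0 \<Longrightarrow> i \<in> {1..N} \<Longrightarrow>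
        ((\<lambda>s. x s i) has_real_derivative
          (1 / (\<Sum>j\<in>{1..N}. w t i j)) *
          (\<Sum>j\<in>{1..N} - {i}. w t i j * phi (x t j - x t i) * (x t j - x t i)))
        (at t within {0..})"
    and w_ode: "\<And>t i j. t \<ge> 0 \<Longrightarrow> i \<in> {1..N} \<Longrightarrow> j \<in> {1..N} \<Longrightarrow> i \<noteq> j \<Longrightarrow>
        ((\<lambda>s. w s i j) has_real_derivative
          (phi (x t j - x t i) * fp (w t) i j - (1 - phi (x t j - x t i)) * fm (w t) i j))
        (at t within {0..})"
    and c_phi_pos: "c_phi > 0"
    and phi_lower: "\<And>r. r \<in> {-2..2} \<Longrightarrow> phi r > c_phi"
    and c_f_pos: "c_f > 0"
    and fp_lower: "\<And>v i j. v \<in> mat_box N \<Longrightarrow> i \<in> {1..N} \<Longrightarrow> j \<in> {1..N} \<Longrightarrow> i \<noteq> j \<Longrightarrow>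
        v i j = 0 \<Longrightarrow> fp v i j > c_f"
  shows "\<exists>xs\<in>{-1..1}. \<forall>i\<in>{1..N}. ((\<lambda>t. x t i) \<longlongrightarrow> xs) at_top"
proof (cases "N = 0")
  case True
  then show ?thesis by (intro bexI[of _ 0]) auto
next
  case False
  interpret opinion_network N phi fp fm x w c_phi c_f
    by unfold_locales (fact assms)+
  obtain \<kappa> T where \<kappa>: "0 < \<kappa>" "\<kappa> \<le> 1" "0 \<le> T"
    and coupling_lower: "\<And>t i j. T \<le> t \<Longrightarrow> i \<in> {1..N} \<Longrightarrow> j \<in> {1..N} \<Longrightarrow> i \<noteq> j \<Longrightarrow>
      \<kappa> \<le> coupling t i j"
    using coupling_eventually_bounded_below[OF False] by blast
  interpret eventually_uniform: consensus_dynamics "{1..N}" T x coupling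
    using consensus_dynamics.later_start[OF opinion_consensus_dynamics \<open>0 \<le> T\<close>] .
  obtain L where L: "\<And>i. i \<in> {1..N} \<Longrightarrow> ((\<lambda>t. x t i) \<longlongrightarrow> L) at_top"
    using eventually_uniform.consensus[OF _ \<kappa>(1,2) coupling_lower] False by auto
  have "\<forall>\<^sub>F t in at_top. x t 1 \<in> {-1..1}"
    by (rule eventually_mono[OF eventually_ge_at_top[of 0]]) (use x_range False in auto)
  then have "L \<in> {-1..1}"
    using L[of 1] False by (intro Lim_in_closed_set[of "{-1..1}"]) auto
  then show ?thesis
    using L by blast
qed

end
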